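(* Let $q>1$ and let $(M,\le)$ be a finite ordered monoid such that $M$ is a $T_q$ monoid. Then $N^1(M)=\Omega(n)$.
   Context: $M$ is a $T_q$ monoid if there exist idempotents $e,f\in M$ (i.e. $ee=e$, $ff=f$) such that $(ef)^qe=e$ and $(ef)^re\ne e$ for every positive integer $r$ not divisible by $q$. A finite ordered monoid is a finite monoid with a partial order such that $x\le y\Rightarrow zx\le zy$ and $xz\le yz$. Non-deterministic communication complexity: for $f:X\times Y\to\{0,1\}$, $N^1(f)$ is the minimum cost of a non-deterministic protocol for $f$; equivalently, up to an additive constant 2, $N^1(f)=\log_2 C^1(f)$, where $C^1(f)$ is the minimum number of rectangles $S\times T$ on which $f\equiv1$ whose union is $f^{-1}(1)$. An order ideal is a subset $I\subseteq M$ with $y\in I, x\le y\Rightarrow x\in I$. For an order ideal $I$, $N^1(M,I)(n)$ is $N^1$ of the function where Alice receives $m_1,m_3,\dots,m_{2n-1}\in M$, Bob receives $m_2,\dots,m_{2n}\in M$, with value $1$ iff $m_1\cdots m_{2n}\in I$; $N^1(M)(n)=\max_I N^1(M,I)(n)$. Asymptotics are as $n\to\infty$. *)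

theory Defs
  imports Complex_Main "HOL-Library.Landau_Symbols"
begin

definition ordered_monoid :: "('a::monoid_mult \<Rightarrow> 'a \<Rightarrow> bool) \<Rightarrow> bool" where
  "ordered_monoid le \<longleftrightarrow>
     (\<forall>x. le x x) \<and> (\<forall>x y. le x y \<longrightarrow> le y x \<longrightarrow> x = y) \<and>
     (\<forall>x y z. le x y \<longrightarrow> le y z \<longrightarrow> le x z) \<and>
     (\<forall>x y z. le x y \<longrightarrow> le (z * x) (z * y) \<and> le (x * z) (y * z))"

definition Tq_monoid :: "nat \<Rightarrow> 'a::monoid_mult itself \<Rightarrow> bool" where
  "Tq_monoid q _ \<longleftrightarrow> (\<exists>e f :: 'a. e * e = e \<and> f * f = f \<and> (e * f) ^ q * e = e \<and>
       (\<forall>r::nat. 0 < r \<longrightarrow> \<not> q dvd r \<longrightarrow> (e * f) ^ r * e \<noteq> e))"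

definition order_ideal :: "('a \<Rightarrow> 'a \<Rightarrow> bool) \<Rightarrow> 'a set \<Rightarrow> bool" where
  "order_ideal le I \<longleftrightarrow> (\<forall>x y. y \<in> I \<longrightarrow> le x y \<longrightarrow> x \<in> I)"

definition cover_number :: "('x \<Rightarrow> 'y \<Rightarrow> bool) \<Rightarrow> 'x set \<Rightarrow> 'y set \<Rightarrow> nat" where
  "cover_number f X Y = (LEAST k. \<exists>R :: ('x set \<times> 'y set) set.
      finite R \<and> card R = k \<and>
      (\<forall>(S, T) \<in> R. S \<subseteq> X \<and> T \<subseteq> Y \<and> (\<forall>x\<in>S. \<forall>y\<in>T. f x y)) \<and>
      (\<Union>(S, T) \<in> R. S \<times> T) = {(x, y). x \<in> X \<and> y \<in> Y \<and> f x y})"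

text \<open>Non-deterministic complexity, taken as log2 of the cover number.\<close>
definition N1 :: "('x \<Rightarrow> 'y \<Rightarrow> bool) \<Rightarrow> 'x set \<Rightarrow> 'y set \<Rightarrow> real" where
  "N1 f X Y = log 2 (real (cover_number f X Y))"

text \<open>Alice holds xs = [m1, m3, ..., m_{2n-1}], Bob holds ys = [m2, ..., m_{2n}];
  the product m1 m2 ... m_{2n} is prod_list (map2 (*) xs ys).\<close>
definition word_problem :: "'a::monoid_mult set \<Rightarrow> 'a list \<Rightarrow> 'a list \<Rightarrow> bool" where
  "word_problem I xs ys \<longleftrightarrow> prod_list (map2 (*) xs ys) \<in> I"

definition N1_ideal :: "'a::monoid_mult set \<Rightarrow> nat \<Rightarrow> real" where
  "N1_ideal I n = N1 (word_problem I) {xs. length xs = n} {ys. length ys = n}"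

definition N1_monoid :: "('a::{monoid_mult,finite} \<Rightarrow> 'a \<Rightarrow> bool) \<Rightarrow> nat \<Rightarrow> real" where
  "N1_monoid le n = Max {N1_ideal I n | I. order_ideal le I}"

end

theory Submission
  imports Defs
begin

(*
  The proof reduces inner product modulo q to the word problem of M.
  (1) Using the characters x |-> exp(2 pi i x/q) of Z/q and Parseval's identity,
      any rectangle S x T of vectors in (Z/q)^m on which the inner product mod q
      is constant satisfies |S| |T| <= q^m.
  (2) For every residue C there are at least q^(2(m-1)) pairs (a, b) with
      a . b = C (mod q); hence any rectangle cover of such a 1-set needs at least
      q^(m-2) rectangles (the cover-number bound is proved for a general reduction).
  (3) Inner products of vectors in {0..q-1}^m are encoded as the number of
      positions where two bit strings of length n >= m q^2 are both true.
  (4) With the T_q idempotents e, f, bit strings are turned into letters whose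
      interleaved product is (ef)^k e, k the number of positions where not both
      bits are true; in the ordered monoid, (ef)^k e <= e holds iff q divides k.
  So the word problem for the order ideal {x. x <= e} contains inner product mod q
  on m = n div q^2 coordinates, and N1(M)(n) >= n div q^2 - 2.
*)

section \<open>Characters of the cyclic group of order q\<close>

definition unit_root :: "nat \<Rightarrow> nat \<Rightarrow> complex" where
  "unit_root q k = cis (2 * pi * real k / real q)"

lemma unit_root_add: "unit_root q (a + b) = unit_root q a * unit_root q b"
  unfolding unit_root_def by (simp add: cis_mult add_divide_distrib distrib_left)

lemma unit_root_mult: "unit_root q (a * b) = unit_root q b ^ a"
  unfolding unit_root_def by (simp add: DeMoivre mult_ac)

lemma norm_unit_root [simp]: "norm (unit_root q k) = 1"
  unfolding unit_root_def by simp

lemma unit_root_mod: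
  assumes "q > 0"
  shows "unit_root q k = unit_root q (k mod q)"
proof -
  have period: "unit_root q q = 1"
    using assms by (simp add: unit_root_def)
  have "unit_root q k = unit_root q (k mod q) * unit_root q ((k div q) * q)"
    by (simp only: unit_root_add[symmetric] mod_div_mult_eq)
  also have "unit_root q ((k div q) * q) = 1"
    by (simp only: unit_root_mult period power_one)
  finally show ?thesis by simp
qed

lemma unit_root_inj:
  assumes "q > 0" "y < q" "y' < q" "unit_root q y = unit_root q y'"
  shows "y = y'"
  using bij_betw_imp_inj_on[OF bij_betw_roots_unity[OF assms(1)]] assms(2-4)
  unfolding unit_root_def inj_on_def by blast

lemma unit_root_orthogonality:
  assumes q: "q > 0" and y: "y < q" and y': "y' < q"
  shows "(\<Sum>x<q. unit_root q (x * y) * cnj (unit_root q (x * y'))) = (if y = y' then of_nat q else 0)"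
proof -
  define z where "z = unit_root q y * cnj (unit_root q y')"
  have terms: "unit_root q (x * y) * cnj (unit_root q (x * y')) = z ^ x" for x
    by (simp add: z_def unit_root_mult power_mult_distrib)
  have unit: "w * cnj w = 1" if "norm w = 1" for w :: complex
    using that complex_norm_square[of w] by simp
  have "z ^ q = unit_root q (q * y) * cnj (unit_root q (q * y'))"
    by (simp add: z_def unit_root_mult power_mult_distrib)
  also have "\<dots> = 1"
    using q unit_root_mod[OF q, of "q * y"] unit_root_mod[OF q, of "q * y'"]
    by (simp add: unit_root_def)
  finally have zq: "z ^ q = 1" .
  have z1: "z = 1 \<longleftrightarrow> y = y'"
  proof
    assume "z = 1"
    moreover have "z * unit_root q y' = unit_root q y * (unit_root q y' * cnj (unit_root q y'))"
      by (simp add: z_def mult_ac)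
    ultimately have "unit_root q y = unit_root q y'" by (simp add: unit)
    then show "y = y'" using unit_root_inj[OF q y y'] by simp
  qed (simp add: z_def unit)
  show ?thesis
  proof (cases "y = y'")
    case True
    then show ?thesis by (simp add: terms z1[symmetric])
  next
    case False
    then have "z \<noteq> 1" using z1 by simp
    then have "(\<Sum>x<q. z ^ x) = 0" using geometric_sum[of z q] zq by simp
    then show ?thesis using False by (simp add: terms)
  qed
qed

section \<open>Inner product modulo q\<close>

definition vecs :: "nat \<Rightarrow> nat \<Rightarrow> nat list set" where
  "vecs q m = {xs. set xs \<subseteq> {..<q} \<and> length xs = m}"

definition dot :: "nat list \<Rightarrow> nat list \<Rightarrow> nat" where
  "dot a b = sum_list (map2 (*) a b)"

lemma dot_Cons [simp]: "dot (x # xs) (y # ys) = x * y + dot xs ys"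
  by (simp add: dot_def)

lemma dot_eq_sum:
  assumes "length a = m" "length b = m"
  shows "dot a b = (\<Sum>i<m. a ! i * b ! i)"
  using assms by (simp add: dot_def sum_list_sum_nth atLeast0LessThan)

lemma finite_vecs [simp]: "finite (vecs q m)"
  unfolding vecs_def by (rule finite_lists_length_eq) simp

lemma card_vecs: "card (vecs q m) = q ^ m"
  unfolding vecs_def using card_lists_length_eq[of "{..<q}" m] by simp

lemma vecs_Suc: "vecs q (Suc m) = (\<lambda>(x, xs). x # xs) ` ({..<q} \<times> vecs q m)"
  by (auto simp: vecs_def length_Suc_conv)

lemma vecs_orthogonality:
  assumes q: "q > 0"
  shows "t \<in> vecs q m \<Longrightarrow> t' \<in> vecs q m \<Longrightarrow>
    (\<Sum>s\<in>vecs q m. unit_root q (dot s t) * cnj (unit_root q (dot s t'))) =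
    (if t = t' then of_nat (q ^ m) else 0)"
proof (induction m arbitrary: t t')
  case 0
  have "vecs q 0 = {[]}" "t = []" "t' = []" using 0 by (auto simp: vecs_def)
  then show ?case by (simp add: unit_root_def dot_def)
next
  case (Suc m)
  from Suc.prems obtain y ys y' ys' where t: "t = y # ys" and t': "t' = y' # ys'"
    and y: "y < q" "y' < q" and ys: "ys \<in> vecs q m" "ys' \<in> vecs q m"
    by (cases t; cases t') (auto simp: vecs_def)
  have inj: "inj_on (\<lambda>(x, xs). x # xs) ({..<q} \<times> vecs q m)"
    by (auto simp: inj_on_def)
  have "(\<Sum>s\<in>vecs q (Suc m). unit_root q (dot s t) * cnj (unit_root q (dot s t')))
      = (\<Sum>(x, xs)\<in>{..<q} \<times> vecs q m.
          (unit_root q (x * y) * cnj (unit_root q (x * y'))) *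
          (unit_root q (dot xs ys) * cnj (unit_root q (dot xs ys'))))"
    unfolding vecs_Suc sum.reindex[OF inj] t t'
    by (intro sum.cong refl) (auto simp: unit_root_add mult_ac)
  also have "\<dots> = (\<Sum>x<q. unit_root q (x * y) * cnj (unit_root q (x * y'))) *
      (\<Sum>xs\<in>vecs q m. unit_root q (dot xs ys) * cnj (unit_root q (dot xs ys')))"
    by (simp add: sum.cartesian_product[symmetric] sum_product)
  also have "\<dots> = (if t = t' then of_nat (q ^ Suc m) else 0)"
    using unit_root_orthogonality[OF q y] Suc.IH[OF ys] by (simp add: t t')
  finally show ?case .
qed

text \<open>With F(s) the character sum over T, Parseval gives
  \<Sum>_s |F(s)|^2 = |T| q^m, while |F(s)| = |T| for every s in S.\<close>
lemma constant_dot_rectangle_bound: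
  assumes q: "q > 0" and S: "S \<subseteq> vecs q m" and T: "T \<subseteq> vecs q m"
    and const: "\<And>s t. s \<in> S \<Longrightarrow> t \<in> T \<Longrightarrow> dot s t mod q = C"
  shows "card S * card T \<le> q ^ m"
proof -
  define F where "F s = (\<Sum>t\<in>T. unit_root q (dot s t))" for s
  have finT: "finite T" using finite_subset[OF T finite_vecs] .
  have "(\<Sum>s\<in>vecs q m. F s * cnj (F s))
      = (\<Sum>t\<in>T. \<Sum>t'\<in>T. \<Sum>s\<in>vecs q m. unit_root q (dot s t) * cnj (unit_root q (dot s t')))"
    unfolding F_def cnj_sum sum_product
    by (subst sum.swap) (intro sum.cong refl sum.swap)
  also have "\<dots> = (\<Sum>t\<in>T. \<Sum>t'\<in>T. if t = t' then of_nat (q ^ m) else 0)"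
    using T by (intro sum.cong refl) (simp add: vecs_orthogonality[OF q] subsetD)
  finally have "(\<Sum>s\<in>vecs q m. F s * cnj (F s)) = of_nat (card T * q ^ m)"
    using finT by simp
  then have "complex_of_real (\<Sum>s\<in>vecs q m. (norm (F s))\<^sup>2) = of_nat (card T * q ^ m)"
    by (simp only: of_real_sum complex_norm_square)
  then have parseval: "(\<Sum>s\<in>vecs q m. (norm (F s))\<^sup>2) = real (card T * q ^ m)"
    by (metis of_real_eq_iff of_real_of_nat_eq)
  have on_S: "norm (F s) = real (card T)" if "s \<in> S" for s
  proof -
    have "F s = (\<Sum>t\<in>T. unit_root q C)"
      unfolding F_def using that const by (intro sum.cong refl) (metis unit_root_mod[OF q])
    then show ?thesis by (simp add: norm_mult)
  qed
  have "real (card S * card T ^ 2) = (\<Sum>s\<in>S. (norm (F s))\<^sup>2)"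
    using on_S by simp
  also have "\<dots> \<le> (\<Sum>s\<in>vecs q m. (norm (F s))\<^sup>2)"
    using S by (intro sum_mono2) auto
  finally have "card S * card T * card T \<le> q ^ m * card T"
    unfolding parseval of_nat_le_iff by (simp add: power2_eq_square mult_ac)
  then show ?thesis by (cases "card T = 0") simp_all
qed

text \<open>Every residue C is hit by at least q^(2m) pairs of vectors of length m + 1:
  the first coordinate 1 of a and a suitable first coordinate of b fix the residue.\<close>
lemma card_dot_mod_ge:
  assumes q: "q > 1" and C: "C < q"
  shows "q ^ (2 * m) \<le> card {(a, b). a \<in> vecs q (Suc m) \<and> b \<in> vecs q (Suc m) \<and> dot a b mod q = C}"
    (is "_ \<le> card ?P")
proof -
  define c where "c xs ys = (C + q - dot xs ys mod q) mod q" for xs ys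
  define h where "h p = (1 # fst p, c (fst p) (snd p) # snd p)" for p
  have hits: "(c xs ys + dot xs ys) mod q = C" for xs ys
  proof -
    have "(c xs ys + dot xs ys) mod q = (C + q - dot xs ys mod q + dot xs ys mod q) mod q"
      unfolding c_def by (simp only: mod_add_left_eq mod_add_right_eq)
    also have "\<dots> = (C + q) mod q"
    proof -
      have "dot xs ys mod q \<le> C + q" using mod_less_divisor[of q "dot xs ys"] q by linarith
      then show ?thesis by (simp only: le_add_diff_inverse2)
    qed
    finally show ?thesis using C by simp
  qed
  have "h ` (vecs q m \<times> vecs q m) \<subseteq> ?P"
    using q hits by (auto simp: h_def vecs_def c_def add.commute)
  moreover have "inj_on h (vecs q m \<times> vecs q m)"
    by (auto simp: h_def inj_on_def)
  moreover have "finite ?P"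
    by (rule finite_subset[of _ "vecs q (Suc m) \<times> vecs q (Suc m)"]) auto
  ultimately have "card (vecs q m \<times> vecs q m) \<le> card ?P"
    by (meson card_inj_on_le)
  then show ?thesis by (simp add: card_cartesian_product card_vecs power_add mult_2)
qed

section \<open>Rectangle covers\<close>

lemma cover_number_attained:
  assumes "finite X" "finite Y"
  shows "\<exists>R. finite R \<and> card R = cover_number f X Y \<and>
      (\<forall>(S, T) \<in> R. S \<subseteq> X \<and> T \<subseteq> Y \<and> (\<forall>x\<in>S. \<forall>y\<in>T. f x y)) \<and>
      (\<Union>(S, T) \<in> R. S \<times> T) = {(x, y). x \<in> X \<and> y \<in> Y \<and> f x y}"
proof -
  define ones where "ones = {(x, y). x \<in> X \<and> y \<in> Y \<and> f x y}"
  define P where "P k = (\<exists>R. finite R \<and> card R = k \<and>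
      (\<forall>(S, T) \<in> R. S \<subseteq> X \<and> T \<subseteq> Y \<and> (\<forall>x\<in>S. \<forall>y\<in>T. f x y)) \<and>
      (\<Union>(S, T) \<in> R. S \<times> T) = ones)" for k
  (* The singleton rectangles of the 1-inputs form a cover. *)
  have "finite ones"
    by (rule finite_subset[of _ "X \<times> Y"]) (use assms in \<open>auto simp: ones_def\<close>)
  then have "P (card ((\<lambda>(x, y). ({x}, {y})) ` ones))"
    unfolding P_def by (intro exI[of _ "(\<lambda>(x, y). ({x}, {y})) ` ones"]) (auto simp: ones_def)
  then have "P (LEAST k. P k)" by (rule LeastI)
  then show ?thesis unfolding P_def ones_def cover_number_def .
qed

lemma cover_number_lower_bound:
  fixes f :: "'x \<Rightarrow> 'y \<Rightarrow> bool" and g :: "'a \<Rightarrow> 'b \<Rightarrow> bool"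
  assumes X: "finite X" and Y: "finite Y" and A: "finite A" and B: "finite B"
    and \<alpha>: "\<alpha> ` A \<subseteq> X" and \<beta>: "\<beta> ` B \<subseteq> Y"
    and reduction: "\<And>a b. a \<in> A \<Longrightarrow> b \<in> B \<Longrightarrow> f (\<alpha> a) (\<beta> b) \<longleftrightarrow> g a b"
    and rectangles: "\<And>S T. S \<subseteq> A \<Longrightarrow> T \<subseteq> B \<Longrightarrow> (\<forall>s\<in>S. \<forall>t\<in>T. g s t) \<Longrightarrow> card S * card T \<le> K"
  shows "card {(a, b). a \<in> A \<and> b \<in> B \<and> g a b} \<le> cover_number f X Y * K"
proof -
  obtain R where finR: "finite R" and cardR: "card R = cover_number f X Y"
    and rect: "\<forall>(S, T) \<in> R. S \<subseteq> X \<and> T \<subseteq> Y \<and> (\<forall>x\<in>S. \<forall>y\<in>T. f x y)"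
    and cover: "(\<Union>(S, T) \<in> R. S \<times> T) = {(x, y). x \<in> X \<and> y \<in> Y \<and> f x y}"
    using cover_number_attained[OF X Y, of f] by blast
  define pull where "pull \<rho> = {a \<in> A. \<alpha> a \<in> fst \<rho>} \<times> {b \<in> B. \<beta> b \<in> snd \<rho>}" for \<rho>
  have "{(a, b). a \<in> A \<and> b \<in> B \<and> g a b} \<subseteq> (\<Union>\<rho>\<in>R. pull \<rho>)"
  proof safe
    fix a b assume ab: "a \<in> A" "b \<in> B" "g a b"
    then have "(\<alpha> a, \<beta> b) \<in> (\<Union>(S, T) \<in> R. S \<times> T)"
      unfolding cover using \<alpha> \<beta> reduction by auto
    then show "(a, b) \<in> (\<Union>\<rho>\<in>R. pull \<rho>)" using ab by (force simp: pull_def)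
  qed
  then have "card {(a, b). a \<in> A \<and> b \<in> B \<and> g a b} \<le> card (\<Union>\<rho>\<in>R. pull \<rho>)"
    by (rule card_mono[rotated]) (use finR A B in \<open>simp add: pull_def\<close>)
  also have "\<dots> \<le> (\<Sum>\<rho>\<in>R. card (pull \<rho>))" by (rule card_UN_le[OF finR])
  also have "\<dots> \<le> (\<Sum>\<rho>\<in>R. K)"
  proof (rule sum_mono)
    fix \<rho> assume "\<rho> \<in> R"
    then obtain S T where \<rho>: "\<rho> = (S, T)" and ones: "\<forall>x\<in>S. \<forall>y\<in>T. f x y"
      using rect by (cases \<rho>) auto
    show "card (pull \<rho>) \<le> K"
      unfolding pull_def \<rho> card_cartesian_product fst_conv snd_conv
      by (rule rectangles) (use ones reduction in auto)
  qed
  finally show ?thesis using cardR by simp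
qed

section \<open>Encoding inner products by bit strings\<close>

definition count_and :: "bool list \<Rightarrow> bool list \<Rightarrow> nat" where
  "count_and u v = length (filter (\<lambda>(a, b). a \<and> b) (zip u v))"

definition count_nand :: "bool list \<Rightarrow> bool list \<Rightarrow> nat" where
  "count_nand u v = length (filter (\<lambda>(a, b). \<not> (a \<and> b)) (zip u v))"

lemma count_nand_Cons [simp]:
  "count_nand (a # u) (b # v) = (if a \<and> b then 0 else 1) + count_nand u v"
  by (simp add: count_nand_def)

lemma count_nand_Nil [simp]: "count_nand [] v = 0"
  by (simp add: count_nand_def)

lemma count_nand_plus_count_and:
  "length u = length v \<Longrightarrow> count_nand u v + count_and u v = length u"
  unfolding count_nand_def count_and_def
  using sum_length_filter_compl[of "\<lambda>(a, b). a \<and> b" "zip u v"]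
  by (simp add: case_prod_unfold)

lemma count_and_map: "count_and (map f ps) (map g ps) = length (filter (\<lambda>p. f p \<and> g p) ps)"
  by (induction ps) (simp_all add: count_and_def)

lemma count_and_padding:
  "length u = length v \<Longrightarrow> count_and (u @ replicate k True) (v @ replicate k False) = count_and u v"
  by (simp add: count_and_def zip_append)

text \<open>Alice's string has a q \<times> q block per coordinate i, true in the rows r < a_i;
  Bob's is true in the columns c < b_i, so block i contributes a_i b_i common trues.
  The strings are padded to length n with values that never match.\<close>
definition cells :: "nat \<Rightarrow> nat \<Rightarrow> (nat \<times> nat \<times> nat) list" where
  "cells q m = List.product [0..<m] (List.product [0..<q] [0..<q])"

definition alice_bits :: "nat \<Rightarrow> nat \<Rightarrow> nat list \<Rightarrow> bool list" where
  "alice_bits q n a = map (\<lambda>(i, r, c). r < a ! i) (cells q (length a))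
     @ replicate (n - length a * (q * q)) True"

definition bob_bits :: "nat \<Rightarrow> nat \<Rightarrow> nat list \<Rightarrow> bool list" where
  "bob_bits q n b = map (\<lambda>(i, r, c). c < b ! i) (cells q (length b))
     @ replicate (n - length b * (q * q)) False"

lemma length_cells [simp]: "length (cells q m) = m * (q * q)"
  by (simp add: cells_def)

lemma length_alice_bits: "length a * (q * q) \<le> n \<Longrightarrow> length (alice_bits q n a) = n"
  by (simp add: alice_bits_def)

lemma length_bob_bits: "length b * (q * q) \<le> n \<Longrightarrow> length (bob_bits q n b) = n"
  by (simp add: bob_bits_def)

lemma count_and_bits:
  assumes a: "a \<in> vecs q m" and b: "b \<in> vecs q m"
  shows "count_and (alice_bits q n a) (bob_bits q n b) = dot a b"
proof -
  have len: "length a = m" "length b = m" using a b by (auto simp: vecs_def)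
  have small: "a ! i < q" "b ! i < q" if "i < m" for i
  proof -
    have "a ! i \<in> set a" "b ! i \<in> set b" using that len by simp_all
    then show "a ! i < q" "b ! i < q" using a b by (auto simp: vecs_def)
  qed
  have "count_and (alice_bits q n a) (bob_bits q n b)
      = length (filter (\<lambda>(i, r, c). r < a ! i \<and> c < b ! i) (cells q m))"
    unfolding alice_bits_def bob_bits_def len
    by (simp add: count_and_padding count_and_map case_prod_unfold)
  also have "\<dots> = card ({(i, r, c). r < a ! i \<and> c < b ! i} \<inter> set (cells q m))"
    by (rule distinct_length_filter) (simp add: cells_def distinct_product)
  also have "{(i, r, c). r < a ! i \<and> c < b ! i} \<inter> set (cells q m)
      = (SIGMA i:{..<m}. {..<a ! i} \<times> {..<b ! i})"
    by (auto simp: cells_def dest: small)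
  also have "card (SIGMA i:{..<m}. {..<a ! i} \<times> {..<b ! i}) = (\<Sum>i<m. a ! i * b ! i)"
    by simp
  finally show ?thesis using dot_eq_sum[OF len] by simp
qed

section \<open>Products in a T_q monoid\<close>

definition alice_letter :: "'a::monoid_mult \<Rightarrow> 'a \<Rightarrow> bool \<Rightarrow> 'a" where
  "alice_letter e f u = (if u then e else e * f)"

definition bob_letter :: "'a::monoid_mult \<Rightarrow> 'a \<Rightarrow> bool \<Rightarrow> 'a" where
  "bob_letter e f v = (if v then e else f * e)"

lemma letter_product:
  fixes e f :: "'a::monoid_mult"
  assumes "e * e = e" "f * f = f"
  shows "alice_letter e f u * bob_letter e f v = (e * f) ^ (if u \<and> v then 0 else 1) * e"
proof -
  have "e * f * (f * e) = e * (f * f) * e" by (simp add: mult.assoc)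
  then show ?thesis using assms by (auto simp: alice_letter_def bob_letter_def mult.assoc)
qed

lemma idempotent_absorbs:
  fixes e f :: "'a::monoid_mult"
  assumes "e * e = e"
  shows "e * ((e * f) ^ k * e) = (e * f) ^ k * e"
proof (cases k)
  case 0 then show ?thesis using assms by simp
next
  case (Suc j)
  have "e * ((e * f) ^ k * e) = (e * e) * f * ((e * f) ^ j * e)"
    by (simp add: Suc mult.assoc)
  then show ?thesis using assms by (simp add: Suc mult.assoc)
qed

lemma letters_product:
  fixes e f :: "'a::monoid_mult"
  assumes ee: "e * e = e" and ff: "f * f = f"
  shows "length u = length v \<Longrightarrow> u \<noteq> [] \<Longrightarrow>
    prod_list (map2 (*) (map (alice_letter e f) u) (map (bob_letter e f) v)) = (e * f) ^ count_nand u v * e"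
proof (induction u arbitrary: v)
  case Nil then show ?case by simp
next
  case (Cons a u)
  then obtain b v' where v: "v = b # v'" and len: "length u = length v'" by (cases v) auto
  show ?case
  proof (cases "u = []")
    case True
    then show ?thesis using len v letter_product[OF ee ff, of a b] by simp
  next
    case False
    have "prod_list (map2 (*) (map (alice_letter e f) (a # u)) (map (bob_letter e f) v))
        = (e * f) ^ (if a \<and> b then 0 else 1) * (e * ((e * f) ^ count_nand u v' * e))"
      using v Cons.IH[OF len False] by (simp add: letter_product[OF ee ff] mult.assoc)
    then show ?thesis
      by (simp add: idempotent_absorbs[OF ee] v power_add mult.assoc)
  qed
qed

lemma power_period:
  fixes g e :: "'a::monoid_mult"
  assumes "g ^ q * e = e"
  shows "g ^ k * e = g ^ (k mod q) * e"
proof -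
  have multiple: "g ^ (q * t) * e = e" for t
    by (induction t) (simp_all add: power_add mult.assoc assms)
  have "g ^ k * e = g ^ (k mod q) * g ^ (q * (k div q)) * e"
    by (simp only: power_add[symmetric] mod_mult_div_eq)
  also have "\<dots> = g ^ (k mod q) * e" by (simp add: mult.assoc multiple)
  finally show ?thesis .
qed

text \<open>In an ordered monoid, if g^q fixes e and g^k e \<le> e, then g^k e = e:
  multiplying by g^k gives a descending chain e \<ge> g^k e \<ge> g^(2k) e \<ge> ...
  which returns to e after q steps.\<close>
lemma ordered_periodic_orbit:
  fixes g e :: "'a::monoid_mult"
  assumes om: "ordered_monoid le" and period: "g ^ q * e = e" and q: "q > 0"
    and below: "le (g ^ k * e) e"
  shows "g ^ k * e = e"
proof -
  have trans: "\<And>x y z. le x y \<Longrightarrow> le y z \<Longrightarrow> le x z"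
    and mono: "\<And>x y w. le x y \<Longrightarrow> le (w * x) (w * y)"
    and antisym: "\<And>x y. le x y \<Longrightarrow> le y x \<Longrightarrow> x = y"
    using om unfolding ordered_monoid_def by blast+
  define z where "z j = g ^ (j * k) * e" for j
  have descent: "le (z (Suc j)) (z j)" for j
  proof -
    have "g ^ (j * k) * (g ^ k * e) = z (Suc j)"
      unfolding z_def by (simp add: power_add[symmetric] mult.assoc[symmetric] add.commute)
    then show ?thesis using mono[OF below, of "g ^ (j * k)"] by (simp only: z_def[of j])
  qed
  have chain: "le (z (Suc j)) (z 1)" for j
  proof (induction j)
    case 0 then show ?case using om by (simp add: ordered_monoid_def)
  next
    case (Suc j) then show ?case using descent trans by blast
  qed
  have "z q = e" using power_period[OF period, of "q * k"] by (simp add: z_def mult.commute)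
  then have "le e (z 1)" using chain[of "q - 1"] q by simp
  then show ?thesis using antisym below by (simp add: z_def)
qed

lemma Tq_below_iff:
  fixes e f :: "'a::monoid_mult"
  assumes om: "ordered_monoid le" and q: "q > 0"
    and period: "(e * f) ^ q * e = e"
    and aperiodic: "\<forall>r::nat. 0 < r \<longrightarrow> \<not> q dvd r \<longrightarrow> (e * f) ^ r * e \<noteq> e"
  shows "le ((e * f) ^ k * e) e \<longleftrightarrow> q dvd k"
proof
  assume "le ((e * f) ^ k * e) e"
  then have "(e * f) ^ (k mod q) * e = e"
    using ordered_periodic_orbit[OF om period q] power_period[OF period] by metis
  then show "q dvd k" using aperiodic q by (metis dvd_mod_iff dvd_refl mod_greater_zero_iff_not_dvd)
next
  assume "q dvd k"
  then show "le ((e * f) ^ k * e) e"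
    using om power_period[OF period, of k] by (simp add: ordered_monoid_def)
qed

lemma cover_number_word_problem:
  fixes le :: "'a::{monoid_mult,finite} \<Rightarrow> 'a \<Rightarrow> bool" and e f :: 'a
  assumes om: "ordered_monoid le" and q: "q > 1"
    and ee: "e * e = e" and ff: "f * f = f"
    and period: "(e * f) ^ q * e = e"
    and aperiodic: "\<forall>r::nat. 0 < r \<longrightarrow> \<not> q dvd r \<longrightarrow> (e * f) ^ r * e \<noteq> e"
    and m: "m \<ge> 2" and n: "m * (q * q) \<le> n"
  shows "q ^ (m - 2) \<le> cover_number (word_problem {x. le x e}) {xs. length xs = n} {ys. length ys = n}"
proof -
  define X where "X = {xs :: 'a list. length xs = n}"
  define \<alpha> where "\<alpha> a = map (alice_letter e f) (alice_bits q n a)" for a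
  define \<beta> where "\<beta> b = map (bob_letter e f) (bob_bits q n b)" for b
  have finX: "finite X"
    unfolding X_def using finite_lists_length_eq[of "UNIV :: 'a set" n] by simp
  have len: "length (alice_bits q n a) = n" "length (bob_bits q n b) = n"
    if "a \<in> vecs q m" "b \<in> vecs q m" for a b
    using that n length_alice_bits length_bob_bits by (auto simp: vecs_def)
  have "0 < m * (q * q)" using m q by simp
  then have n0: "n \<noteq> 0" using n by linarith
  have reduction: "word_problem {x. le x e} (\<alpha> a) (\<beta> b) \<longleftrightarrow> dot a b mod q = n mod q"
    if a: "a \<in> vecs q m" and b: "b \<in> vecs q m" for a b
  proof -
    let ?u = "alice_bits q n a" and ?v = "bob_bits q n b"
    have uv: "length ?u = length ?v" "?u \<noteq> []" using len[OF a b] n0 by auto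
    have nand: "count_nand ?u ?v + dot a b = n"
      using count_nand_plus_count_and[OF uv(1)] count_and_bits[OF a b] len[OF a b] by simp
    have "word_problem {x. le x e} (\<alpha> a) (\<beta> b) \<longleftrightarrow> q dvd count_nand ?u ?v"
      unfolding word_problem_def \<alpha>_def \<beta>_def letters_product[OF ee ff uv]
      using Tq_below_iff[OF om _ period aperiodic] q by simp
    also have "\<dots> \<longleftrightarrow> dot a b mod q = n mod q"
      using nand by (metis mod_eq_dvd_iff_nat le_add2 add_diff_cancel_right')
    finally show ?thesis .
  qed
  obtain m' where m': "m = Suc m'" "m' \<ge> 1" using m by (cases m) auto
  have "(m' - 1) + m = 2 * m'" using m' by simp
  then have "q ^ (m' - 1) * q ^ m = q ^ (2 * m')"
    by (simp only: power_add[symmetric])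
  also have "\<dots> \<le> card {(a, b). a \<in> vecs q m \<and> b \<in> vecs q m \<and> dot a b mod q = n mod q}"
    unfolding m'(1) using q by (intro card_dot_mod_ge) simp_all
  also have "\<dots> \<le> cover_number (word_problem {x. le x e}) X X * q ^ m"
  proof (rule cover_number_lower_bound[OF finX finX finite_vecs finite_vecs])
    show "\<alpha> ` vecs q m \<subseteq> X" "\<beta> ` vecs q m \<subseteq> X"
      using len unfolding X_def \<alpha>_def \<beta>_def by auto
  qed (use reduction q in \<open>auto intro: constant_dot_rectangle_bound\<close>)
  finally show ?thesis using q m' unfolding X_def by simp
qed

lemma N1_ideal_le_N1_monoid:
  fixes le :: "'a::{monoid_mult,finite} \<Rightarrow> 'a \<Rightarrow> bool"
  assumes "order_ideal le I"
  shows "N1_ideal I n \<le> N1_monoid le n"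
proof -
  have "{N1_ideal I n | I. order_ideal le I} \<subseteq> (\<lambda>I. N1_ideal I n) ` (UNIV :: 'a set set)" by blast
  then have "finite {N1_ideal I n | I. order_ideal le I}" by (rule finite_subset) simp
  then show ?thesis unfolding N1_monoid_def by (rule Max_ge) (use assms in blast)
qed

lemma bigomega_from_div_bound:
  fixes F :: "nat \<Rightarrow> real"
  assumes Q: "Q > 0" and bound: "\<And>n. 2 * Q \<le> n \<Longrightarrow> real (n div Q) - 2 \<le> F n"
  shows "F \<in> \<Omega>(\<lambda>n. real n)"
proof (rule landau_omega.bigI[of "1 / (2 * real Q)"])
  show "0 < 1 / (2 * real Q)" using Q by simp
  show "\<forall>\<^sub>F n in at_top. 1 / (2 * real Q) * norm (real n) \<le> norm (F n)"
    unfolding eventually_at_top_linorder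
  proof (intro exI allI impI)
    fix n :: nat assume n: "n \<ge> 6 * Q"
    have "real n / real Q - 1 < of_int \<lfloor>real n / real Q\<rfloor>"
      by (rule real_of_int_floor_gt_diff_one)
    also have "\<lfloor>real n / real Q\<rfloor> = int (n div Q)"
      by (rule floor_divide_of_nat_eq)
    finally have "real n < real Q * real (n div Q) + real Q"
      using Q by (simp add: field_simps)
    moreover have "real Q * real (n div Q) \<le> real Q * (F n + 2)"
    proof (rule mult_left_mono)
      show "real (n div Q) \<le> F n + 2" using bound[of n] n by linarith
    qed simp
    moreover have "6 * real Q \<le> real n" using n by simp
    ultimately have "real n \<le> 2 * real Q * F n" by (simp add: algebra_simps)
    then have "1 / (2 * real Q) * real n \<le> F n"
      using Q by (simp add: field_simps)
    then show "1 / (2 * real Q) * norm (real n) \<le> norm (F n)"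
      using abs_ge_self[of "F n"] by simp
  qed
qed

theorem mainTheorem13:
  fixes le :: "'a::{monoid_mult,finite} \<Rightarrow> 'a \<Rightarrow> bool" and q :: nat
  assumes "q > 1" and "ordered_monoid le" and "Tq_monoid q TYPE('a)"
  shows "(\<lambda>n. N1_monoid le n) \<in> \<Omega>(\<lambda>n. real n)"
proof (rule bigomega_from_div_bound)
  obtain e f :: 'a where ee: "e * e = e" and ff: "f * f = f"
    and period: "(e * f) ^ q * e = e"
    and aperiodic: "\<forall>r::nat. 0 < r \<longrightarrow> \<not> q dvd r \<longrightarrow> (e * f) ^ r * e \<noteq> e"
    using assms(3) unfolding Tq_monoid_def by blast
  have ideal: "order_ideal le {x. le x e}"
    using assms(2) unfolding order_ideal_def ordered_monoid_def by blast
  show "q * q > 0" using assms(1) by simp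
  fix n assume n: "2 * (q * q) \<le> n"
  define m where "m = n div (q * q)"
  have m: "m \<ge> 2" "m * (q * q) \<le> n"
    using div_le_mono[OF n, of "q * q"] assms(1) by (simp_all add: m_def div_times_less_eq_dividend)
  have "real (m - 2) \<le> log 2 (real (q ^ (m - 2)))"
    using assms(1) by (simp add: log_nat_power mult_le_cancel_left1)
  also have "\<dots> \<le> N1_ideal {x. le x e} n"
    unfolding N1_ideal_def N1_def
    using assms(1) cover_number_word_problem[OF assms(2,1) ee ff period aperiodic m]
    by (intro log_mono) simp_all
  also have "\<dots> \<le> N1_monoid le n" by (rule N1_ideal_le_N1_monoid[OF ideal])
  finally show "real (n div (q * q)) - 2 \<le> N1_monoid le n" using m by (simp add: m_def)
qed

end
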